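(* Consider graph-based ANM with symmetric altruism where the $g_i$ are USL with common slope $\beta>0$, each modification adds/removes a single undirected edge, and an arbitrary target profile $x^*$ with $I=\{i: x^*_i=1\}$. Define $t_i=c_i-\big(g_i(1,n_i)-g_i(0,n_i)\big)$ (with $n_i$ evaluated at $x^*$). Construct the undirected graph $F^0=(V,E_F^0)$ with $\{i,j\}\in E_F^0$ iff $j\in N_H(i)\cap N_{G^0}(i)$; define degree sets $D_i=\{\lceil t_i/(a\beta)\rceil,\dots,n-1\}$ for $i\in I$ and $D_i=\{0,\dots,\lfloor t_i/(a\beta)\rfloor\}$ for $i\notin I$; define pair costs $c'_{ij}=c_{ij}$ if $\{i,j\}\in E_F^0$ or $\{i,j\}\in E_H$, and $c'_{ij}=+\infty$ otherwise. Then the minimum cost of modifying $G^0$ into an undirected graph $G$ such that $x^*$ is a PSNE of the game with altruism graph $G$ equals the minimum cost of modifying $F^0$ (adding/removing edges, where each pair $\{i,j\}$ in the symmetric difference costs $c'_{ij}$) into a graph $F$ such that $\deg_F(i)\in D_i$ for all $i\in V$.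
   Context: Binary networked public goods game (BNPG): a simple undirected loop-free graph $H=(V,E_H)$ on agents $V=\{1,\dots,n\}$; each agent $i$ chooses $x_i\in\{0,1\}$ ($1$ = invest). For a profile $x$, $n_i=\sum_{j\in N_H(i)}x_j$, where $N_H(i)$ is the set of neighbors of $i$ in $H$. Each agent has a function $g_i(x_i,n_i)\ge 0$, non-decreasing in both arguments, and an investment cost $c_i$. Given an altruism matrix $\alpha=(\alpha_{ij})$, the utility of agent $i$ is $u_i(x)=g_i(x_i,n_i)-c_ix_i+\sum_{j\in N_H(i)}\alpha_{ij}\,g_j(x_j,n_j)$. A profile $x$ is a pure-strategy Nash equilibrium (PSNE) if no agent can strictly increase its utility by unilaterally switching its action. Graph-based altruism: given an altruism graph $G$ on $V$ and a constant $a>0$, $\alpha_{ii}=1$, $\alpha_{ij}=a$ if $(i,j)$ is an edge of $G$, and $\alpha_{ij}=0$ otherwise; "symmetric altruism" means $G$ is undirected (an edge $\{i,j\}$ sets both $\alpha_{ij}=\alpha_{ji}=a$). $N_G(i)$ denotes the neighbor set of $i$ in $G$. Graph-based Altruism Network Modification (ANM): given $H$, the $g_i$, $c_i$, $a$, an initial altruism graph $G^0$, a target profile $x^*\in\{0,1\}^n$, and a cost $c_{ij}\ge 0$ for each undirected node pair — the cost of removing the edge if it is in $G^0$, and of adding it otherwise — find a graph $G$ obtained from $G^0$ by adding/removing edges, minimizing the total cost of the pairs in the symmetric difference of the edge sets of $G^0$ and $G$, such that $x^*$ is a PSNE of the game with altruism graph $G$. USL (uniform separable linear): every $g_i$ has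 the form $g_i(x_i,n_i)=h_i(x_i)+\beta n_i$ for some function $h_i$ and a constant $\beta$ common to all agents. *)

theory Defs
  imports Complex_Main "HOL-Library.Extended_Real"
begin

definition simple_graph :: "'v set set \<Rightarrow> bool" where
  "simple_graph E \<longleftrightarrow> (\<forall>e\<in>E. \<exists>i j. i \<noteq> j \<and> e = {i, j})"

definition nbrs :: "'v set set \<Rightarrow> 'v \<Rightarrow> 'v set" where
  "nbrs E i = {j. j \<noteq> i \<and> {i, j} \<in> E}"

definition deg :: "'v set set \<Rightarrow> 'v \<Rightarrow> nat" where
  "deg E i = card (nbrs E i)"

text \<open>Number of investing neighbours n_i of agent i in network H under profile x (values 0/1).\<close>
definition nb :: "'v::finite set set \<Rightarrow> ('v \<Rightarrow> nat) \<Rightarrow> 'v \<Rightarrow> nat" where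
  "nb H x i = (\<Sum>j\<in>nbrs H i. x j)"

definition utility :: "'v::finite set set \<Rightarrow> ('v \<Rightarrow> nat \<Rightarrow> nat \<Rightarrow> real) \<Rightarrow> ('v \<Rightarrow> real)
    \<Rightarrow> ('v \<Rightarrow> 'v \<Rightarrow> real) \<Rightarrow> ('v \<Rightarrow> nat) \<Rightarrow> 'v \<Rightarrow> real" where
  "utility H g c \<alpha> x i =
     g i (x i) (nb H x i) - c i * real (x i)
     + (\<Sum>j\<in>nbrs H i. \<alpha> i j * g j (x j) (nb H x j))"

definition PSNE :: "'v::finite set set \<Rightarrow> ('v \<Rightarrow> nat \<Rightarrow> nat \<Rightarrow> real) \<Rightarrow> ('v \<Rightarrow> real)
    \<Rightarrow> ('v \<Rightarrow> 'v \<Rightarrow> real) \<Rightarrow> ('v \<Rightarrow> nat) \<Rightarrow> bool" where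
  "PSNE H g c \<alpha> x \<longleftrightarrow> (\<forall>i. x i \<le> 1) \<and>
     (\<forall>i. \<not> (utility H g c \<alpha> (x(i := 1 - x i)) i > utility H g c \<alpha> x i))"

definition graph_altruism :: "real \<Rightarrow> 'v set set \<Rightarrow> 'v \<Rightarrow> 'v \<Rightarrow> real" where
  "graph_altruism a G i j = (if i = j then 1 else if {i, j} \<in> G then a else 0)"

definition symdiff :: "'a set \<Rightarrow> 'a set \<Rightarrow> 'a set" where
  "symdiff A B = (A - B) \<union> (B - A)"

text \<open>Optimal value of graph-based ANM (infimum over feasible graphs; +infinity if none).\<close>
definition ANM_opt :: "'v::finite set set \<Rightarrow> ('v \<Rightarrow> nat \<Rightarrow> nat \<Rightarrow> real) \<Rightarrow> ('v \<Rightarrow> real)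
    \<Rightarrow> real \<Rightarrow> 'v set set \<Rightarrow> ('v \<Rightarrow> nat) \<Rightarrow> ('v set \<Rightarrow> real) \<Rightarrow> ereal" where
  "ANM_opt H g c a G0 xs cost =
     Inf {ereal (\<Sum>e\<in>symdiff G0 G. cost e) | G.
            simple_graph G \<and> PSNE H g c (graph_altruism a G) xs}"

definition degmod_opt :: "'v::finite set set \<Rightarrow> ('v \<Rightarrow> int set) \<Rightarrow> ('v set \<Rightarrow> ereal) \<Rightarrow> ereal" where
  "degmod_opt F0 D cost' =
     Inf {(\<Sum>e\<in>symdiff F0 F. cost' e) | F.
            simple_graph F \<and> (\<forall>i. int (deg F i) \<in> D i)}"

end

theory Submission
  imports Defs
begin

text \<open>Under USL utilities, switching agent i changes its own payoff by the private term and changes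
  each H-neighbour's payoff by exactly \<beta> times the switch; altruism weights these neighbour changes
  by a on the edges shared by H and G. Hence agent i has no profitable deviation iff its degree in
  H \<inter> G lies on the correct side of the threshold t_i/(a\<beta>), i.e. x* is a PSNE iff the graph
  H \<inter> G satisfies the degree constraints D_i. Edges of G outside H are irrelevant to this condition,
  so an optimal modification never touches them, and modifying G0 amounts to modifying H \<inter> G0
  inside H, with infinite cost on every pair outside H.\<close>

lemma nb_fun_upd_neighbour:
  assumes "j \<in> nbrs H i"
  shows "real (nb H (x(i := v)) j) = real (nb H x j) - real (x i) + real v"
proof -
  have i: "i \<in> nbrs H j" using assms by (auto simp: nbrs_def insert_commute)
  have "nb H (x(i := v)) j = v + sum (x(i := v)) (nbrs H j - {i})"
    unfolding nb_def using sum.remove[OF _ i, of "x(i := v)"] by simp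
  also have "sum (x(i := v)) (nbrs H j - {i}) = sum x (nbrs H j - {i})"
    by (rule sum.cong) auto
  finally have "nb H (x(i := v)) j = v + sum x (nbrs H j - {i})" .
  moreover have "nb H x j = x i + sum x (nbrs H j - {i})"
    unfolding nb_def using sum.remove[OF _ i, of x] by simp
  ultimately show ?thesis by simp
qed

lemma nb_fun_upd_self: "nb H (x(i := v)) i = nb H x i"
  unfolding nb_def by (rule sum.cong) (auto simp: nbrs_def)

lemma utility_fun_upd_diff_USL:
  assumes g: "\<And>i u m. g i u m = h i u + \<beta> * real m"
  shows "utility H g c \<alpha> (x(i := v)) i - utility H g c \<alpha> x i
    = h i v - h i (x i) - c i * (real v - real (x i))
      + \<beta> * (real v - real (x i)) * (\<Sum>j\<in>nbrs H i. \<alpha> i j)"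
proof -
  have "(\<Sum>j\<in>nbrs H i. \<alpha> i j * g j ((x(i := v)) j) (nb H (x(i := v)) j))
     = (\<Sum>j\<in>nbrs H i. \<alpha> i j * g j (x j) (nb H x j) + \<beta> * (real v - real (x i)) * \<alpha> i j)"
  proof (rule sum.cong)
    fix j assume j: "j \<in> nbrs H i"
    hence "j \<noteq> i" by (auto simp: nbrs_def)
    thus "\<alpha> i j * g j ((x(i := v)) j) (nb H (x(i := v)) j)
        = \<alpha> i j * g j (x j) (nb H x j) + \<beta> * (real v - real (x i)) * \<alpha> i j"
      by (simp add: g nb_fun_upd_neighbour[OF j] algebra_simps)
  qed simp
  also have "\<dots> = (\<Sum>j\<in>nbrs H i. \<alpha> i j * g j (x j) (nb H x j))
      + \<beta> * (real v - real (x i)) * (\<Sum>j\<in>nbrs H i. \<alpha> i j)"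
    by (simp add: sum.distrib sum_distrib_left)
  finally show ?thesis
    unfolding utility_def nb_fun_upd_self by (simp add: g algebra_simps)
qed

lemma sum_graph_altruism_nbrs:
  fixes H G :: "'v::finite set set"
  shows "(\<Sum>j\<in>nbrs H i. graph_altruism a G i j) = a * real (deg (H \<inter> G) i)"
proof -
  have "(\<Sum>j\<in>nbrs H i. graph_altruism a G i j) = (\<Sum>j\<in>nbrs H i. if j \<in> nbrs G i then a else 0)"
    by (rule sum.cong) (auto simp: graph_altruism_def nbrs_def)
  also have "\<dots> = (\<Sum>j\<in>nbrs H i \<inter> nbrs G i. a)"
    using sum.inter_restrict[of "nbrs H i" "\<lambda>_. a" "nbrs G i"] by (simp add: mult.commute)
  also have "nbrs H i \<inter> nbrs G i = nbrs (H \<inter> G) i" by (auto simp: nbrs_def)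
  finally show ?thesis by (simp add: deg_def mult.commute)
qed

lemma deg_le_card_minus_one: "int (deg F (i::'v::finite)) \<le> int (card (UNIV::'v set)) - 1"
proof -
  have "nbrs F i \<subseteq> UNIV - {i}" by (auto simp: nbrs_def)
  hence "deg F i \<le> card (UNIV - {i})" unfolding deg_def by (intro card_mono) auto
  moreover have "0 < card (UNIV::'v set)" by (simp add: finite_UNIV_card_ge_0)
  ultimately show ?thesis by (simp add: card_Diff_singleton of_nat_diff)
qed

lemma no_profitable_switch_iff_deg:
  fixes H :: "'v::finite set set" and c :: "'v \<Rightarrow> real"
  assumes g: "\<And>i u m. g i u m = h i u + \<beta> * real m"
    and ab: "a * \<beta> > 0" and x_bin: "x i \<le> 1"
  defines "t \<equiv> c i - (g i 1 (nb H x i) - g i 0 (nb H x i))"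
  shows "\<not> utility H g c (graph_altruism a G) (x(i := 1 - x i)) i
            > utility H g c (graph_altruism a G) x i
    \<longleftrightarrow> (if x i = 1 then \<lceil>t / (a * \<beta>)\<rceil> \<le> int (deg (H \<inter> G) i)
         else int (deg (H \<inter> G) i) \<le> \<lfloor>t / (a * \<beta>)\<rfloor>)"
proof -
  define d where "d = real (deg (H \<inter> G) i)"
  have t: "t = c i - (h i 1 - h i 0)" by (simp add: t_def g)
  have gain: "utility H g c (graph_altruism a G) (x(i := 1 - x i)) i
      - utility H g c (graph_altruism a G) x i
    = h i (1 - x i) - h i (x i) - c i * (real (1 - x i) - real (x i))
      + \<beta> * (real (1 - x i) - real (x i)) * (a * d)"
    unfolding utility_fun_upd_diff_USL[OF g] sum_graph_altruism_nbrs d_def ..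
  show ?thesis
  proof (cases "x i = 1")
    case True
    have "t \<le> (a * \<beta>) * d \<longleftrightarrow> t / (a * \<beta>) \<le> d"
      using ab by (simp add: pos_divide_le_eq mult.commute)
    thus ?thesis
      using gain True by (auto simp: t d_def ceiling_le_iff algebra_simps)
  next
    case False
    hence "x i = 0" using x_bin by linarith
    moreover have "(a * \<beta>) * d \<le> t \<longleftrightarrow> d \<le> t / (a * \<beta>)"
      using ab by (simp add: pos_le_divide_eq mult.commute)
    ultimately show ?thesis
      using gain by (auto simp: t d_def le_floor_iff algebra_simps)
  qed
qed

lemma PSNE_graph_altruism_iff_deg:
  fixes H :: "'v::finite set set" and c :: "'v \<Rightarrow> real"
  assumes g: "\<And>i u m. g i u m = h i u + \<beta> * real m"
    and ab: "a * \<beta> > 0" and x_bin: "\<And>i. x i \<le> 1"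
  defines "t \<equiv> \<lambda>i. c i - (g i 1 (nb H x i) - g i 0 (nb H x i))"
  shows "PSNE H g c (graph_altruism a G) x \<longleftrightarrow>
    (\<forall>i. int (deg (H \<inter> G) i) \<in> (if x i = 1
       then {k. \<lceil>t i / (a * \<beta>)\<rceil> \<le> k \<and> k \<le> int (card (UNIV::'v set)) - 1}
       else {k. 0 \<le> k \<and> k \<le> \<lfloor>t i / (a * \<beta>)\<rfloor>}))"
proof -
  have "\<not> utility H g c (graph_altruism a G) (x(i := 1 - x i)) i
            > utility H g c (graph_altruism a G) x i
    \<longleftrightarrow> int (deg (H \<inter> G) i) \<in> (if x i = 1
       then {k. \<lceil>t i / (a * \<beta>)\<rceil> \<le> k \<and> k \<le> int (card (UNIV::'v set)) - 1}
       else {k. 0 \<le> k \<and> k \<le> \<lfloor>t i / (a * \<beta>)\<rfloor>})" for i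
    using no_profitable_switch_iff_deg[where x=x and i=i and G=G and H=H and c=c, OF g ab x_bin]
      deg_le_card_minus_one[of "H \<inter> G" i]
    unfolding t_def by simp
  thus ?thesis unfolding PSNE_def using x_bin by blast
qed

lemma simple_graph_Int_eq_edge_set:
  assumes "simple_graph H"
  shows "{{i, j} | i j. i \<noteq> j \<and> j \<in> nbrs H i \<inter> nbrs G i} = H \<inter> G"
  using assms by (fastforce simp: simple_graph_def nbrs_def)

lemma sum_ereal_if_mem_subset:
  assumes "S \<subseteq> H"
  shows "(\<Sum>e\<in>S. if e \<in> H then ereal (cost e) else \<infinity>) = ereal (\<Sum>e\<in>S. cost e)"
  using assms by (simp add: subset_iff cong: sum.cong)

lemma sum_ereal_if_mem_eq_infinity:
  fixes F :: "'v::finite set set"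
  assumes "\<not> F \<subseteq> H" and "\<And>e. cost e \<ge> 0"
  shows "(\<Sum>e\<in>symdiff (H \<inter> G0) F. if e \<in> H then ereal (cost e) else \<infinity>) = \<infinity>"
proof -
  obtain e where e: "e \<in> F" "e \<notin> H" using assms(1) by blast
  hence "e \<in> symdiff (H \<inter> G0) F" by (simp add: symdiff_def)
  moreover have "0 \<le> (\<Sum>e\<in>symdiff (H \<inter> G0) F - {e}. if e \<in> H then ereal (cost e) else \<infinity>)"
    using assms(2) by (intro sum_nonneg) simp
  ultimately show ?thesis
    using e(2) by (simp add: sum.remove[of _ e])
qed

text \<open>Any G can be replaced by (G0 - H) \<union> (H \<inter> G), which agrees with G on H and with G0 outside H,
  so only modifications inside H matter.\<close>

lemma Inf_modification_cost_restrict: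
  fixes H G0 :: "'v::finite set set" and cost :: "'v set \<Rightarrow> real"
  assumes H: "simple_graph H" and G0: "simple_graph G0" and cost_nonneg: "\<And>e. cost e \<ge> 0"
  shows "Inf {ereal (\<Sum>e\<in>symdiff G0 G. cost e) | G. simple_graph G \<and> P (H \<inter> G)}
       = Inf {(\<Sum>e\<in>symdiff (H \<inter> G0) F. if e \<in> H then ereal (cost e) else \<infinity>) | F.
                simple_graph F \<and> P F}"
  (is "Inf ?ANM = Inf ?Mod")
proof (rule antisym)
  show "Inf ?ANM \<le> Inf ?Mod"
  proof (rule Inf_greatest, clarify)
    fix F assume sF: "simple_graph F" and PF: "P F"
    show "Inf ?ANM \<le> (\<Sum>e\<in>symdiff (H \<inter> G0) F. if e \<in> H then ereal (cost e) else \<infinity>)"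
    proof (cases "F \<subseteq> H")
      case True
      define G where "G = (G0 - H) \<union> F"
      have "simple_graph G" using G0 sF by (auto simp: simple_graph_def G_def)
      moreover have "H \<inter> G = F" using True by (auto simp: G_def)
      ultimately have "Inf ?ANM \<le> ereal (\<Sum>e\<in>symdiff G0 G. cost e)"
        using PF by (intro Inf_lower) auto
      also have "symdiff G0 G = symdiff (H \<inter> G0) F" using True by (auto simp: symdiff_def G_def)
      also have "ereal (\<Sum>e\<in>symdiff (H \<inter> G0) F. cost e)
          = (\<Sum>e\<in>symdiff (H \<inter> G0) F. if e \<in> H then ereal (cost e) else \<infinity>)"
        using True by (intro sum_ereal_if_mem_subset[symmetric]) (auto simp: symdiff_def)
      finally show ?thesis .
    qed (simp add: sum_ereal_if_mem_eq_infinity cost_nonneg)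
  qed
  show "Inf ?Mod \<le> Inf ?ANM"
  proof (rule Inf_greatest, clarify)
    fix G assume "simple_graph G" and PG: "P (H \<inter> G)"
    have "simple_graph (H \<inter> G)" using H by (auto simp: simple_graph_def)
    hence "Inf ?Mod \<le> (\<Sum>e\<in>symdiff (H \<inter> G0) (H \<inter> G). if e \<in> H then ereal (cost e) else \<infinity>)"
      using PG by (intro Inf_lower) auto
    also have "\<dots> = ereal (\<Sum>e\<in>symdiff (H \<inter> G0) (H \<inter> G). cost e)"
      by (intro sum_ereal_if_mem_subset) (auto simp: symdiff_def)
    also have "\<dots> \<le> ereal (\<Sum>e\<in>symdiff G0 G. cost e)"
      using cost_nonneg by (subst ereal_less_eq(3), intro sum_mono2) (auto simp: symdiff_def)
    finally show "Inf ?Mod \<le> ereal (\<Sum>e\<in>symdiff G0 G. cost e)" .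
  qed
qed

theorem theorem5:
  fixes H G0 :: "'v::finite set set"
    and g :: "'v \<Rightarrow> nat \<Rightarrow> nat \<Rightarrow> real"
    and c :: "'v \<Rightarrow> real"
    and a \<beta> :: real
    and xs :: "'v \<Rightarrow> nat"
    and cost :: "'v set \<Rightarrow> real"
  assumes H: "simple_graph H"
    and G0: "simple_graph G0"
    and g_nonneg: "\<And>i u m. g i u m \<ge> 0"
    and g_mono: "\<And>i u u' m m'. u \<le> u' \<Longrightarrow> m \<le> m' \<Longrightarrow> g i u m \<le> g i u' m'"
    and USL: "\<exists>h :: 'v \<Rightarrow> nat \<Rightarrow> real. \<forall>i u m. g i u m = h i u + \<beta> * real m"
    and beta_pos: "\<beta> > 0"
    and a_pos: "a > 0"
    and xs_bin: "\<And>i. xs i \<le> 1"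
    and cost_nonneg: "\<And>e. cost e \<ge> 0"
  shows
    "let n = card (UNIV :: 'v set);
         t = (\<lambda>i. c i - (g i 1 (nb H xs i) - g i 0 (nb H xs i)));
         F0 = {{i, j} | i j. i \<noteq> j \<and> j \<in> nbrs H i \<inter> nbrs G0 i};
         D = (\<lambda>i. if xs i = 1
                   then {k::int. \<lceil>t i / (a * \<beta>)\<rceil> \<le> k \<and> k \<le> int n - 1}
                   else {k::int. 0 \<le> k \<and> k \<le> \<lfloor>t i / (a * \<beta>)\<rfloor>});
         cost' = (\<lambda>e. if e \<in> F0 \<or> e \<in> H then ereal (cost e) else \<infinity>)
     in ANM_opt H g c a G0 xs cost = degmod_opt F0 D cost'"
proof -
  obtain h where g: "\<And>i u m. g i u m = h i u + \<beta> * real m" using USL by blast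
  have ab: "a * \<beta> > 0" using a_pos beta_pos by simp
  have cost': "(\<lambda>e. if e \<in> H \<inter> G0 \<or> e \<in> H then ereal (cost e) else \<infinity>)
      = (\<lambda>e. if e \<in> H then ereal (cost e) else \<infinity>)"
    by auto
  show ?thesis
    unfolding Let_def simple_graph_Int_eq_edge_set[OF H] cost' ANM_opt_def degmod_opt_def
      PSNE_graph_altruism_iff_deg[OF g ab xs_bin]
    by (rule Inf_modification_cost_restrict[OF H G0 cost_nonneg])
qed

end
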